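(* Let $\mathcal{P}_1,\mathcal{P}_2\subseteq\mathbb{R}^n$ be non-empty topologically closed convex polyhedra, where $\mathcal{P}_1=\mathrm{con}(\mathcal{C}_1)=\mathrm{gen}(\mathcal{G}_1)$ for a finite constraint system $\mathcal{C}_1$ and a generator system $\mathcal{G}_1=(R_1,P_1)$. Then $\mathcal{P}_1\uplus\mathcal{P}_2\neq\mathcal{P}_1\cup\mathcal{P}_2$ if and only if there exist a constraint $\beta_1\in\mathcal{C}_1$ and a generator $g_1$ of $\mathcal{G}_1$ (i.e., a ray in $R_1$ or a point in $P_1$) such that (1) $g_1$ saturates $\beta_1$, (2) $\mathcal{P}_2$ violates $\beta_1$, and (3) $\mathcal{P}_2$ does not subsume $g_1$.
   Context: A constraint is a non-strict linear inequality $\langle\mathbf{a},\mathbf{x}\rangle\le b$ with $\mathbf{a}\in\mathbb{R}^n\setminus\{\mathbf{0}\}$, $b\in\mathbb{R}$ (equalities are treated as pairs of inequalities). For a finite set $\mathcal{C}$ of constraints, $\mathrm{con}(\mathcal{C})=\{\mathbf{p}\in\mathbb{R}^n : \langle\mathbf{a},\mathbf{p}\rangle\le b \text{ for all } (\langle\mathbf{a},\mathbf{x}\rangle\le b)\in\mathcal{C}\}$; such sets are the (topologically closed convex) polyhedra. A generator system is a pair $(R,P)$ of finite sets $R=\{\mathbf{r}_1,\dots,\mathbf{r}_r\}$, $P=\{\mathbf{p}_1,\dots,\mathbf{p}_p\}\subseteq\mathbb{R}^n$ with $\mathbf{0}\notin R$, and $\mathrm{gen}((R,P))=\{\sum_i\rho_i\mathbf{r}_i+\sum_i\sigma_i\mathbf{p}_i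 : \rho_i\ge 0,\ \sigma_i\ge0,\ \sum_i\sigma_i=1\}$; elements of $R$ are called rays and elements of $P$ points of the generator system. A vector $\mathbf{r}\neq\mathbf{0}$ is a ray of a non-empty polyhedron $\mathcal{P}$ if $\mathbf{p}+\rho\mathbf{r}\in\mathcal{P}$ for all $\mathbf{p}\in\mathcal{P}$, $\rho\ge0$. A point $\mathbf{p}$ saturates the constraint $\langle\mathbf{a},\mathbf{x}\rangle\le b$ if $\langle\mathbf{a},\mathbf{p}\rangle=b$; a ray $\mathbf{r}$ saturates it if $\langle\mathbf{a},\mathbf{r}\rangle=0$. A polyhedron violates a constraint if some point of it does not satisfy the constraint. A polyhedron $\mathcal{P}$ subsumes a point $\mathbf{p}$ if $\mathbf{p}\in\mathcal{P}$, and subsumes a ray $\mathbf{r}$ if $\mathbf{r}$ is a ray of $\mathcal{P}$. $\mathcal{P}_1\uplus\mathcal{P}_2$ denotes the convex polyhedral hull, i.e., the smallest closed convex polyhedron containing $\mathcal{P}_1\cup\mathcal{P}_2$; if $\mathcal{P}_i=\mathrm{gen}((R_i,P_i))$ then $\mathcal{P}_1\uplus\mathcal{P}_2=\mathrm{gen}((R_1\cup R_2,P_1\cup P_2))$. *)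

theory Defs
  imports "HOL-Analysis.Analysis"
begin

text \<open>A constraint \<open>\<langle>a,x\<rangle> \<le> b\<close> is represented by the pair \<open>(a, b)\<close>, with \<open>a \<noteq> 0\<close>.\<close>

definition valid_constraint :: "(real^'n) \<times> real \<Rightarrow> bool" where
  "valid_constraint c \<longleftrightarrow> fst c \<noteq> 0"

definition con :: "((real^'n) \<times> real) set \<Rightarrow> (real^'n) set" where
  "con C = {p. \<forall>(a, b) \<in> C. a \<bullet> p \<le> b}"

definition valid_gensys :: "(real^'n) set \<Rightarrow> (real^'n) set \<Rightarrow> bool" where
  "valid_gensys R P \<longleftrightarrow> finite R \<and> finite P \<and> 0 \<notin> R"

definition gen :: "(real^'n) set \<times> (real^'n) set \<Rightarrow> (real^'n) set" where
  "gen G = {x. \<exists>\<rho> \<sigma>. (\<forall>r\<in>fst G. \<rho> r \<ge> 0) \<and> (\<forall>p\<in>snd G. \<sigma> p \<ge> 0)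
              \<and> (\<Sum>p\<in>snd G. \<sigma> p) = 1
              \<and> x = (\<Sum>r\<in>fst G. \<rho> r *\<^sub>R r) + (\<Sum>p\<in>snd G. \<sigma> p *\<^sub>R p)}"

definition is_polyhedron :: "(real^'n) set \<Rightarrow> bool" where
  "is_polyhedron Q \<longleftrightarrow> (\<exists>C. finite C \<and> (\<forall>c\<in>C. valid_constraint c) \<and> Q = con C)"

definition is_ray_of :: "(real^'n) set \<Rightarrow> real^'n \<Rightarrow> bool" where
  "is_ray_of Q r \<longleftrightarrow> r \<noteq> 0 \<and> (\<forall>p\<in>Q. \<forall>\<rho>::real. \<rho> \<ge> 0 \<longrightarrow> p + \<rho> *\<^sub>R r \<in> Q)"

definition point_saturates :: "real^'n \<Rightarrow> (real^'n) \<times> real \<Rightarrow> bool" where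
  "point_saturates p c \<longleftrightarrow> fst c \<bullet> p = snd c"

definition ray_saturates :: "real^'n \<Rightarrow> (real^'n) \<times> real \<Rightarrow> bool" where
  "ray_saturates r c \<longleftrightarrow> fst c \<bullet> r = 0"

definition violates :: "(real^'n) set \<Rightarrow> (real^'n) \<times> real \<Rightarrow> bool" where
  "violates Q c \<longleftrightarrow> (\<exists>p\<in>Q. \<not> (fst c \<bullet> p \<le> snd c))"

definition poly_hull :: "(real^'n) set \<Rightarrow> (real^'n) set \<Rightarrow> (real^'n) set" where
  "poly_hull Q1 Q2 = \<Inter> {Q. is_polyhedron Q \<and> Q1 \<union> Q2 \<subseteq> Q}"

end

theory Submission
  imports Defs
begin

text \<open>
  The polyhedral hull of two polyhedra equals their union iff the union is convex, since a
  convex union of two polyhedra has finitely many faces and is therefore again a polyhedron.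
  If some point of \<open>\<P>\<^sub>1\<close> on the facet of a constraint \<open>\<beta>\<^sub>1\<close> is seen from a point of \<open>\<P>\<^sub>2\<close>
  violating \<open>\<beta>\<^sub>1\<close>, convexity of the union forces everything strictly between them into
  \<open>\<P>\<^sub>2\<close>; passing to the limit (for a point) or pushing the segment along the ray (for a ray)
  shows that \<open>\<P>\<^sub>2\<close> subsumes every generator saturating \<open>\<beta>\<^sub>1\<close>. Conversely, walk from
  \<open>x \<in> \<P>\<^sub>1\<close> towards \<open>y \<in> \<P>\<^sub>2\<close>: where the segment leaves \<open>\<P>\<^sub>1\<close> it crosses the facet of a
  constraint \<open>\<beta>\<^sub>1\<close> that \<open>y\<close> violates, and the exit point is a combination of generators
  which all saturate \<open>\<beta>\<^sub>1\<close>; if these are subsumed by \<open>\<P>\<^sub>2\<close>, the rest of the segment lies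
  in \<open>\<P>\<^sub>2\<close>.
\<close>

lemma con_eq_Inter: "con C = \<Inter> ((\<lambda>(a, b). {x. a \<bullet> x \<le> b}) ` C)"
  by (auto simp: con_def)

lemma is_polyhedron_iff_polyhedron: "is_polyhedron Q \<longleftrightarrow> polyhedron Q"
proof
  assume "is_polyhedron Q"
  then show "polyhedron Q"
    by (auto simp: is_polyhedron_def con_eq_Inter intro!: polyhedron_Inter polyhedron_halfspace_le)
next
  assume "polyhedron Q"
  then obtain F where F: "finite F" "Q = \<Inter>F"
    and "\<forall>h\<in>F. \<exists>c. fst c \<noteq> 0 \<and> h = {x. fst c \<bullet> x \<le> snd c}"
    unfolding polyhedron_def by fastforce
  then obtain f where f: "\<And>h. h \<in> F \<Longrightarrow> fst (f h) \<noteq> 0 \<and> h = {x. fst (f h) \<bullet> x \<le> snd (f h)}"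
    by metis
  have "x \<in> h \<longleftrightarrow> fst (f h) \<bullet> x \<le> snd (f h)" if "h \<in> F" for h x
    using f[OF that] by blast
  then have "Q = con (f ` F)"
    unfolding F(2) con_def by (auto simp: case_prod_beta)
  then show "is_polyhedron Q"
    unfolding is_polyhedron_def valid_constraint_def using F(1) f by blast
qed

lemma polyhedron_Un_if_convex:
  fixes S T :: "'a::euclidean_space set"
  assumes "polyhedron S" "polyhedron T" "convex (S \<union> T)"
  shows "polyhedron (S \<union> T)"
proof -
  have "{F. F face_of (S \<union> T)} \<subseteq> (\<lambda>(A, B). A \<union> B) ` ({A. A face_of S} \<times> {B. B face_of T})"
  proof
    fix F assume "F \<in> {F. F face_of (S \<union> T)}"
    then have F: "F face_of (S \<union> T)" by simp
    have "(F \<inter> S) face_of ((S \<union> T) \<inter> S)" "(F \<inter> T) face_of ((S \<union> T) \<inter> T)"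
      using face_of_Int_Int[OF F face_of_refl] assms polyhedron_imp_convex by blast+
    moreover have "F = (F \<inter> S) \<union> (F \<inter> T)" using face_of_imp_subset[OF F] by blast
    ultimately show "F \<in> (\<lambda>(A, B). A \<union> B) ` ({A. A face_of S} \<times> {B. B face_of T})"
      by (auto simp: Int_absorb1 intro!: image_eqI[of _ _ "(F \<inter> S, F \<inter> T)"])
  qed
  moreover have "finite ({A. A face_of S} \<times> {B. B face_of T})"
    using finite_polyhedron_faces assms by blast
  ultimately have "finite {F. F face_of (S \<union> T)}" by (meson finite_imageI finite_subset)
  moreover have "closed (S \<union> T)"
    using assms(1,2) by (simp add: closed_Un polyhedron_imp_closed)
  ultimately show ?thesis
    using assms(3) polyhedron_eq_finite_faces by blast
qed

lemma poly_hull_eq_Un_iff_convex: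
  assumes "is_polyhedron Q1" "is_polyhedron Q2"
  shows "poly_hull Q1 Q2 = Q1 \<union> Q2 \<longleftrightarrow> convex (Q1 \<union> Q2)"
proof
  assume "poly_hull Q1 Q2 = Q1 \<union> Q2"
  moreover have "convex (poly_hull Q1 Q2)"
    unfolding poly_hull_def is_polyhedron_iff_polyhedron
    by (blast intro: convex_Inter polyhedron_imp_convex)
  ultimately show "convex (Q1 \<union> Q2)" by simp
next
  assume "convex (Q1 \<union> Q2)"
  with assms have "is_polyhedron (Q1 \<union> Q2)"
    by (simp add: is_polyhedron_iff_polyhedron polyhedron_Un_if_convex)
  then show "poly_hull Q1 Q2 = Q1 \<union> Q2" unfolding poly_hull_def by blast
qed

lemma mem_con_iff: "x \<in> con C \<longleftrightarrow> (\<forall>(a, b)\<in>C. a \<bullet> x \<le> b)"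
  by (simp add: con_def)

lemma con_le: "x \<in> con C \<Longrightarrow> (a, b) \<in> C \<Longrightarrow> a \<bullet> x \<le> b"
  by (auto simp: con_def)

lemma convex_con: "convex (con C)"
  unfolding con_eq_Inter by (intro convex_Inter) (auto intro: convex_halfspace_le)

lemma closed_con: "closed (con C)"
  unfolding con_eq_Inter by (intro closed_Inter) (auto intro: closed_halfspace_le)

lemma nonpos_if_halfline_bounded:
  fixes A B D :: real
  assumes "\<And>\<rho>. \<rho> \<ge> 0 \<Longrightarrow> A + \<rho> * B \<le> D"
  shows "B \<le> 0"
proof (rule ccontr)
  assume "\<not> B \<le> 0"
  then have "A + ((\<bar>D\<bar> + \<bar>A\<bar> + 1) / B) * B > D" by simp
  with assms[of "(\<bar>D\<bar> + \<bar>A\<bar> + 1) / B"] \<open>\<not> B \<le> 0\<close> show False by simp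
qed

lemma inner_nonpos_if_halfline_in_con:
  assumes "\<And>\<rho>. \<rho> \<ge> 0 \<Longrightarrow> q + \<rho> *\<^sub>R r \<in> con C" and "(c, e) \<in> C"
  shows "c \<bullet> r \<le> 0"
proof (rule nonpos_if_halfline_bounded)
  fix \<rho> :: real assume "\<rho> \<ge> 0"
  then have "c \<bullet> (q + \<rho> *\<^sub>R r) \<le> e" using assms by (blast intro: con_le)
  then show "c \<bullet> q + \<rho> * (c \<bullet> r) \<le> e" by (simp add: inner_add_right)
qed

lemma is_ray_of_con_iff:
  assumes "con C \<noteq> {}"
  shows "is_ray_of (con C) r \<longleftrightarrow> r \<noteq> 0 \<and> (\<forall>(c, e)\<in>C. c \<bullet> r \<le> 0)"
proof
  assume "is_ray_of (con C) r"
  moreover obtain q where "q \<in> con C" using assms by blast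
  ultimately show "r \<noteq> 0 \<and> (\<forall>(c, e)\<in>C. c \<bullet> r \<le> 0)"
    unfolding is_ray_of_def by (blast intro: inner_nonpos_if_halfline_in_con)
next
  assume r: "r \<noteq> 0 \<and> (\<forall>(c, e)\<in>C. c \<bullet> r \<le> 0)"
  have "c \<bullet> (p + \<rho> *\<^sub>R r) \<le> e" if "p \<in> con C" "\<rho> \<ge> 0" "(c, e) \<in> C" for p \<rho> c e
  proof -
    have "\<rho> * (c \<bullet> r) \<le> 0" using r that(2,3) by (auto intro: mult_nonneg_nonpos)
    then show ?thesis using con_le[OF that(1,3)] by (simp add: inner_add_right)
  qed
  with r show "is_ray_of (con C) r" unfolding is_ray_of_def by (auto simp: mem_con_iff)
qed

lemma points_subset_gen:
  assumes "finite P"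
  shows "P \<subseteq> gen (R, P)"
proof
  fix p assume "p \<in> P"
  with assms have "p = (\<Sum>r\<in>R. 0 *\<^sub>R r) + (\<Sum>q\<in>P. (if q = p then 1 else 0) *\<^sub>R q)"
    by (simp add: if_distrib[of "\<lambda>c. c *\<^sub>R _"] sum.delta cong: if_cong)
  with assms \<open>p \<in> P\<close> show "p \<in> gen (R, P)"
    unfolding gen_def by (intro CollectI exI[of _ "\<lambda>_. 0"] exI[of _ "\<lambda>q. if q = p then 1 else 0"]) simp
qed

lemma is_ray_of_gen:
  assumes "valid_gensys R P" "r \<in> R"
  shows "is_ray_of (gen (R, P)) r"
  unfolding is_ray_of_def
proof (intro conjI ballI allI impI)
  show "r \<noteq> 0" using assms by (auto simp: valid_gensys_def)
next
  fix x and t :: real assume "x \<in> gen (R, P)" "t \<ge> 0"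
  then obtain \<rho> \<sigma> where \<rho>\<sigma>: "\<forall>r\<in>R. \<rho> r \<ge> 0" "\<forall>p\<in>P. \<sigma> p \<ge> 0" "(\<Sum>p\<in>P. \<sigma> p) = 1"
    and x: "x = (\<Sum>r\<in>R. \<rho> r *\<^sub>R r) + (\<Sum>p\<in>P. \<sigma> p *\<^sub>R p)"
    by (auto simp: gen_def)
  define \<rho>' where "\<rho>' s = \<rho> s + (if s = r then t else 0)" for s
  have "(\<Sum>s\<in>R. \<rho>' s *\<^sub>R s) = (\<Sum>s\<in>R. \<rho> s *\<^sub>R s) + t *\<^sub>R r"
    using assms by (simp add: \<rho>'_def valid_gensys_def scaleR_add_left sum.distrib
        if_distrib[of "\<lambda>c. c *\<^sub>R _"] sum.delta cong: if_cong)
  then have "x + t *\<^sub>R r = (\<Sum>s\<in>R. \<rho>' s *\<^sub>R s) + (\<Sum>p\<in>P. \<sigma> p *\<^sub>R p)"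
    by (simp add: x)
  moreover have "\<forall>s\<in>R. \<rho>' s \<ge> 0" using \<rho>\<sigma>(1) \<open>t \<ge> 0\<close> by (simp add: \<rho>'_def)
  ultimately show "x + t *\<^sub>R r \<in> gen (R, P)"
    using \<rho>\<sigma>(2,3) unfolding gen_def by auto
qed

lemma combination_in_con:
  assumes "finite R" "finite P" "\<forall>r\<in>R. \<rho> r \<ge> 0" "\<forall>p\<in>P. \<sigma> p \<ge> 0" "(\<Sum>p\<in>P. \<sigma> p) = 1"
    and rays: "\<And>r. r \<in> R \<Longrightarrow> \<rho> r \<noteq> 0 \<Longrightarrow> is_ray_of (con C) r"
    and points: "\<And>p. p \<in> P \<Longrightarrow> \<sigma> p \<noteq> 0 \<Longrightarrow> p \<in> con C"
  shows "(\<Sum>r\<in>R. \<rho> r *\<^sub>R r) + (\<Sum>p\<in>P. \<sigma> p *\<^sub>R p) \<in> con C"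
  unfolding mem_con_iff
proof (clarify)
  fix c e assume ce: "(c, e) \<in> C"
  obtain p where "p \<in> P" "\<sigma> p \<noteq> 0" using assms(5) sum.neutral[of P \<sigma>] by (metis zero_neq_one)
  then have nonempty: "con C \<noteq> {}" using points by blast
  have "\<rho> r * (c \<bullet> r) \<le> 0" if "r \<in> R" for r
  proof (cases "\<rho> r = 0")
    case False
    then have "c \<bullet> r \<le> 0" using rays[OF that] ce is_ray_of_con_iff[OF nonempty] by blast
    then show ?thesis using assms(3) that by (simp add: mult_nonneg_nonpos)
  qed simp
  moreover have "\<sigma> p * (c \<bullet> p) \<le> \<sigma> p * e" if "p \<in> P" for p
    using assms(4) that points[OF that] con_le[OF _ ce]
    by (cases "\<sigma> p = 0") (simp_all add: mult_left_mono)
  ultimately have "(\<Sum>r\<in>R. \<rho> r * (c \<bullet> r)) + (\<Sum>p\<in>P. \<sigma> p * (c \<bullet> p)) \<le> 0 + (\<Sum>p\<in>P. \<sigma> p * e)"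
    by (intro add_mono sum_nonpos sum_mono) auto
  also have "\<dots> = e" using assms(5) by (simp add: sum_distrib_right[symmetric])
  finally show "c \<bullet> ((\<Sum>r\<in>R. \<rho> r *\<^sub>R r) + (\<Sum>p\<in>P. \<sigma> p *\<^sub>R p)) \<le> e"
    by (simp add: inner_add_right inner_sum_right)
qed

lemma saturating_point_in_con_if_generators:
  assumes con_eq_gen: "con C1 = gen (R1, P1)" and valid: "valid_gensys R1 P1"
    and ab: "(a, b) \<in> C1" and w: "w \<in> con C1" "a \<bullet> w = b"
    and rays: "\<And>r. r \<in> R1 \<Longrightarrow> a \<bullet> r = 0 \<Longrightarrow> is_ray_of (con C2) r"
    and points: "\<And>p. p \<in> P1 \<Longrightarrow> a \<bullet> p = b \<Longrightarrow> p \<in> con C2"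
  shows "w \<in> con C2"
proof -
  have fin: "finite R1" "finite P1" using valid by (auto simp: valid_gensys_def)
  obtain \<rho> \<sigma> where \<rho>\<sigma>: "\<forall>r\<in>R1. \<rho> r \<ge> 0" "\<forall>p\<in>P1. \<sigma> p \<ge> 0" "(\<Sum>p\<in>P1. \<sigma> p) = 1"
    and w_eq: "w = (\<Sum>r\<in>R1. \<rho> r *\<^sub>R r) + (\<Sum>p\<in>P1. \<sigma> p *\<^sub>R p)"
    using w(1) by (auto simp: con_eq_gen gen_def)
  have ray_slack: "a \<bullet> r \<le> 0" if "r \<in> R1" for r
    using is_ray_of_gen[OF valid that] is_ray_of_con_iff[of C1] w(1) ab by (auto simp: con_eq_gen)
  have point_slack: "a \<bullet> p \<le> b" if "p \<in> P1" for p
    using points_subset_gen[OF fin(2), of R1] that ab con_eq_gen by (auto intro: con_le)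
  txt \<open>The weighted slacks of the generators are nonnegative and add up to \<open>b - a \<bullet> w = 0\<close>,
    so every generator with a nonzero coefficient saturates \<open>(a, b)\<close>.\<close>
  have "(\<Sum>r\<in>R1. \<rho> r * - (a \<bullet> r)) + (\<Sum>p\<in>P1. \<sigma> p * (b - a \<bullet> p)) = b - a \<bullet> w"
    using \<rho>\<sigma>(3) by (simp add: w_eq inner_add_right inner_sum_right sum_negf sum_subtractf
        right_diff_distrib sum_distrib_right[symmetric])
  also have "\<dots> = 0" using w(2) by simp
  finally have slack_sum: "(\<Sum>r\<in>R1. \<rho> r * - (a \<bullet> r)) + (\<Sum>p\<in>P1. \<sigma> p * (b - a \<bullet> p)) = 0" .
  have ray_terms: "\<forall>r\<in>R1. 0 \<le> \<rho> r * - (a \<bullet> r)" and point_terms: "\<forall>p\<in>P1. 0 \<le> \<sigma> p * (b - a \<bullet> p)"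
    using \<rho>\<sigma>(1,2) ray_slack point_slack by (simp_all add: mult_nonneg_nonpos)
  have "(\<forall>r\<in>R1. \<rho> r * - (a \<bullet> r) = 0) \<and> (\<forall>p\<in>P1. \<sigma> p * (b - a \<bullet> p) = 0)"
    using slack_sum ray_terms point_terms fin
    by (simp add: add_nonneg_eq_0_iff sum_nonneg sum_nonneg_eq_0_iff)
  then show ?thesis
    unfolding w_eq using fin \<rho>\<sigma> rays points by (intro combination_in_con) auto
qed

lemma con_segment_exit:
  assumes "finite C" "x \<in> con C" "z \<notin> con C"
  obtains w a b where "w \<in> closed_segment x z" "w \<in> con C" "(a, b) \<in> C" "a \<bullet> w = b" "b < a \<bullet> z"
proof -
  define S where "S = {(a, b) \<in> C. b < a \<bullet> z}"
  define \<tau> where "\<tau> c = (snd c - fst c \<bullet> x) / (fst c \<bullet> z - fst c \<bullet> x)" for c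
  txt \<open>\<open>\<tau> c\<close> is the parameter at which the segment crosses the boundary of \<open>c\<close>; the first
    crossing among the violated constraints gives the exit point.\<close>
  have "finite S" using assms(1) by (rule rev_finite_subset) (auto simp: S_def)
  moreover have "S \<noteq> {}" using assms(3) by (force simp: S_def mem_con_iff)
  ultimately have "Min (\<tau> ` S) \<in> \<tau> ` S" by (intro Min_in) auto
  then obtain c where c: "c \<in> S" "\<tau> c = Min (\<tau> ` S)" by auto
  obtain a b where ab: "(a, b) \<in> S" and least: "\<And>c'. c' \<in> S \<Longrightarrow> \<tau> (a, b) \<le> \<tau> c'"
    using c \<open>finite S\<close> by (metis Min_le finite_imageI image_eqI prod.exhaust)
  define t where "t = \<tau> (a, b)"
  define w where "w = (1 - t) *\<^sub>R x + t *\<^sub>R z"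
  have inner_w: "c \<bullet> w = c \<bullet> x + t * (c \<bullet> z - c \<bullet> x)" for c
    by (simp add: w_def inner_add_right algebra_simps)
  have abC: "(a, b) \<in> C" and bz: "b < a \<bullet> z" using ab by (auto simp: S_def)
  have xb: "a \<bullet> x \<le> b" using con_le[OF assms(2) abC] .
  then have t: "0 \<le> t" "t < 1" using bz by (auto simp: t_def \<tau>_def divide_simps)
  have "a \<bullet> w = b" using xb bz by (simp add: inner_w t_def \<tau>_def)
  moreover have "w \<in> closed_segment x z"
    using t by (auto simp: in_segment w_def)
  moreover have "w \<in> con C"
    unfolding mem_con_iff
  proof clarify
    fix a' b' assume ab': "(a', b') \<in> C"
    have xb': "a' \<bullet> x \<le> b'" using con_le[OF assms(2) ab'] .
    show "a' \<bullet> w \<le> b'"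
    proof (cases "b' < a' \<bullet> z")
      case True
      then have "t \<le> (b' - a' \<bullet> x) / (a' \<bullet> z - a' \<bullet> x)"
        using least[of "(a', b')"] ab' by (simp add: S_def t_def \<tau>_def)
      with True xb' show ?thesis by (simp add: inner_w pos_le_divide_eq mult.commute)
    next
      case False
      then have "(1 - t) * (a' \<bullet> x) + t * (a' \<bullet> z) \<le> (1 - t) * b' + t * b'"
        using t xb' by (intro add_mono mult_left_mono) auto
      then show ?thesis by (simp add: inner_w algebra_simps)
    qed
  qed
  ultimately show ?thesis using that abC bz by blast
qed

lemma mem_other_if_beyond_constraint:
  assumes "convex (S \<union> T)" "S \<subseteq> {x. a \<bullet> x \<le> b}" "x \<in> S" "y \<in> T" "z \<in> closed_segment x y" "b < a \<bullet> z"
  shows "z \<in> T"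
proof -
  have "z \<in> S \<union> T" using closed_segment_subset[OF _ _ assms(1)] assms(3-5) by blast
  moreover have "z \<notin> S" using assms(2,6) by auto
  ultimately show ?thesis by blast
qed

lemma saturating_point_in_if_convex_Un:
  assumes cv: "convex (con C1 \<union> T)" and "closed T"
    and ab: "(a, b) \<in> C1" and p: "p \<in> con C1" "a \<bullet> p = b" and q: "q \<in> T" "b < a \<bullet> q"
  shows "p \<in> T"
proof -
  have "open_segment p q \<subseteq> T"
  proof
    fix z assume z_seg: "z \<in> open_segment p q"
    then obtain u where u: "0 < u" and z: "z = (1 - u) *\<^sub>R p + u *\<^sub>R q"
      by (auto simp: in_segment)
    have "a \<bullet> z = b + u * (a \<bullet> q - b)"
      using p(2) by (simp add: z inner_add_right algebra_simps)
    also have "\<dots> > b" using u q(2) by simp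
    finally have "b < a \<bullet> z" .
    moreover have "con C1 \<subseteq> {x. a \<bullet> x \<le> b}" using ab con_le by blast
    ultimately show "z \<in> T"
      using mem_other_if_beyond_constraint[OF cv _ p(1) q(1) open_closed_segment[OF z_seg]] by blast
  qed
  have "p \<noteq> q" using p(2) q(2) by auto
  then have "closed_segment p q = closure (open_segment p q)" by simp
  also have "\<dots> \<subseteq> T" using closure_minimal[OF \<open>open_segment p q \<subseteq> T\<close> \<open>closed T\<close>] .
  finally have "closed_segment p q \<subseteq> T" .
  then show ?thesis by auto
qed

lemma saturating_ray_of_if_convex_Un:
  assumes cv: "convex (con C1 \<union> con C2)"
    and ab: "(a, b) \<in> C1" and p0: "p0 \<in> con C1"
    and r: "is_ray_of (con C1) r" "a \<bullet> r = 0" and q: "q \<in> con C2" "b < a \<bullet> q"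
  shows "is_ray_of (con C2) r"
proof -
  have C1_below: "con C1 \<subseteq> {x. a \<bullet> x \<le> b}" using ab con_le by blast
  have den: "0 < a \<bullet> q - a \<bullet> p0" using con_le[OF p0 ab] q(2) by simp
  txt \<open>Move from \<open>q\<close> towards \<open>p0\<close> just far enough to stay strictly beyond the constraint.\<close>
  define \<mu> where "\<mu> = (a \<bullet> q - b) / (2 * (a \<bullet> q - a \<bullet> p0))"
  define q' where "q' = (1 - \<mu>) *\<^sub>R q + \<mu> *\<^sub>R p0"
  have \<mu>: "0 < \<mu>" "\<mu> \<le> 1"
    using den q(2) con_le[OF p0 ab] by (auto simp: \<mu>_def divide_simps)
  have "a \<bullet> q' = a \<bullet> q - \<mu> * (a \<bullet> q - a \<bullet> p0)"
    by (simp add: q'_def inner_add_right algebra_simps)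
  also have "\<dots> = a \<bullet> q - (a \<bullet> q - b) / 2"
    using den by (simp add: \<mu>_def field_simps)
  finally have q'_beyond: "b < a \<bullet> q'" using q(2) by (simp add: field_simps)
  have "q' + \<sigma> *\<^sub>R r \<in> con C2" if "\<sigma> \<ge> 0" for \<sigma>
  proof -
    define y where "y = p0 + (\<sigma> / \<mu>) *\<^sub>R r"
    have y: "y \<in> con C1"
      using r(1) p0 that \<mu>(1) by (simp add: y_def is_ray_of_def)
    have "q' + \<sigma> *\<^sub>R r = (1 - \<mu>) *\<^sub>R q + \<mu> *\<^sub>R y"
      using \<mu>(1) by (simp add: q'_def y_def algebra_simps)
    then have "q' + \<sigma> *\<^sub>R r \<in> closed_segment y q"
      using \<mu> by (subst closed_segment_commute) (auto simp: in_segment intro!: exI[of _ \<mu>])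
    moreover have "b < a \<bullet> (q' + \<sigma> *\<^sub>R r)"
      using q'_beyond r(2) by (simp add: inner_add_right)
    ultimately show ?thesis
      using mem_other_if_beyond_constraint[OF cv C1_below y q(1)] by blast
  qed
  then have "\<forall>(c, e)\<in>C2. c \<bullet> r \<le> 0"
    by (blast intro: inner_nonpos_if_halfline_in_con)
  moreover have "r \<noteq> 0" using r(1) by (simp add: is_ray_of_def)
  moreover have "con C2 \<noteq> {}" using q(1) by blast
  ultimately show ?thesis by (simp add: is_ray_of_con_iff)
qed

lemma closed_segment_subset_Un_if_saturating_generators_subsumed:
  assumes fin: "finite C1" and con_eq_gen: "con C1 = gen (R1, P1)" and valid: "valid_gensys R1 P1"
    and subsumed: "\<And>a b. (a, b) \<in> C1 \<Longrightarrow> violates (con C2) (a, b) \<Longrightarrow>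
      (\<forall>r\<in>R1. a \<bullet> r = 0 \<longrightarrow> is_ray_of (con C2) r) \<and> (\<forall>p\<in>P1. a \<bullet> p = b \<longrightarrow> p \<in> con C2)"
    and x: "x \<in> con C1" and y: "y \<in> con C2"
  shows "closed_segment x y \<subseteq> con C1 \<union> con C2"
proof
  fix z assume z: "z \<in> closed_segment x y"
  show "z \<in> con C1 \<union> con C2"
  proof (cases "z \<in> con C1")
    case False
    then obtain w a b where w: "w \<in> closed_segment x z" "w \<in> con C1"
      and ab: "(a, b) \<in> C1" "a \<bullet> w = b" "b < a \<bullet> z"
      using con_segment_exit[OF fin x] by metis
    have "b < a \<bullet> y"
    proof (rule ccontr)
      assume "\<not> b < a \<bullet> y"
      then have "closed_segment x y \<subseteq> {v. a \<bullet> v \<le> b}"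
        using con_le[OF x ab(1)] by (intro closed_segment_subset convex_halfspace_le) auto
      then show False using z ab(3) by auto
    qed
    then have "violates (con C2) (a, b)" using y by (force simp: violates_def)
    then have "w \<in> con C2"
      using subsumed[OF ab(1)] saturating_point_in_con_if_generators[OF con_eq_gen valid ab(1) w(2) ab(2)]
      by blast
    moreover have "w \<in> closed_segment x y"
      using w(1) z subset_closed_segment[of x z x y] by auto
    then have "z \<in> closed_segment w y"
      using between_swap[of x y w z] w(1) z by (simp add: between_mem_segment)
    ultimately show ?thesis
      using closed_segment_subset[OF _ y convex_con] by blast
  qed simp
qed

lemma convex_Un_con_gen_iff:
  assumes fin: "finite C1" and con_eq_gen: "con C1 = gen (R1, P1)" and valid: "valid_gensys R1 P1"
    and nonempty: "con C1 \<noteq> {}"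
  shows "convex (con C1 \<union> con C2) \<longleftrightarrow>
    (\<forall>\<beta>\<in>C1. violates (con C2) \<beta> \<longrightarrow>
      (\<forall>r\<in>R1. ray_saturates r \<beta> \<longrightarrow> is_ray_of (con C2) r) \<and>
      (\<forall>p\<in>P1. point_saturates p \<beta> \<longrightarrow> p \<in> con C2))"
    (is "_ \<longleftrightarrow> (\<forall>\<beta>\<in>C1. ?subsumed \<beta>)")
proof
  assume cv: "convex (con C1 \<union> con C2)"
  show "\<forall>\<beta>\<in>C1. ?subsumed \<beta>"
  proof (clarify, intro conjI ballI impI)
    fix a b assume ab: "(a, b) \<in> C1" and "violates (con C2) (a, b)"
    then obtain q where q: "q \<in> con C2" "b < a \<bullet> q" by (auto simp: violates_def)
    obtain p0 where p0: "p0 \<in> con C1" using nonempty by blast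
    fix r assume "r \<in> R1" "ray_saturates r (a, b)"
    then show "is_ray_of (con C2) r"
      using saturating_ray_of_if_convex_Un[OF cv ab p0 _ _ q] is_ray_of_gen[OF valid]
      by (simp add: con_eq_gen ray_saturates_def)
  next
    fix a b assume ab: "(a, b) \<in> C1" and "violates (con C2) (a, b)"
    then obtain q where q: "q \<in> con C2" "b < a \<bullet> q" by (auto simp: violates_def)
    fix p assume "p \<in> P1" "point_saturates p (a, b)"
    moreover have "P1 \<subseteq> con C1"
      using points_subset_gen valid by (auto simp: con_eq_gen valid_gensys_def)
    ultimately show "p \<in> con C2"
      using saturating_point_in_if_convex_Un[OF cv closed_con ab _ _ q] by (auto simp: point_saturates_def)
  qed
next
  assume "\<forall>\<beta>\<in>C1. ?subsumed \<beta>"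
  then have segment: "closed_segment x y \<subseteq> con C1 \<union> con C2" if "x \<in> con C1" "y \<in> con C2" for x y
    using that by (intro closed_segment_subset_Un_if_saturating_generators_subsumed[OF fin con_eq_gen valid])
      (auto simp: ray_saturates_def point_saturates_def)
  show "convex (con C1 \<union> con C2)"
    unfolding convex_contains_segment
  proof (intro ballI)
    fix x y assume "x \<in> con C1 \<union> con C2" "y \<in> con C1 \<union> con C2"
    then show "closed_segment x y \<subseteq> con C1 \<union> con C2"
      using segment closed_segment_commute closed_segment_subset[OF _ _ convex_con]
      by (metis Un_iff le_supI1 le_supI2)
  qed
qed

theorem theorem3:
  fixes C1 :: "((real^'n) \<times> real) set"
    and R1 P1 :: "(real^'n) set"
    and Q1 Q2 :: "(real^'n) set"
  assumes "finite C1" and "\<forall>c\<in>C1. valid_constraint c"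
    and "valid_gensys R1 P1"
    and "Q1 = con C1" and "Q1 = gen (R1, P1)"
    and "Q1 \<noteq> {}"
    and "is_polyhedron Q2" and "Q2 \<noteq> {}"
  shows "poly_hull Q1 Q2 \<noteq> Q1 \<union> Q2 \<longleftrightarrow>
    (\<exists>\<beta>\<in>C1.
        (\<exists>r\<in>R1. ray_saturates r \<beta> \<and> violates Q2 \<beta> \<and> \<not> is_ray_of Q2 r)
      \<or> (\<exists>p\<in>P1. point_saturates p \<beta> \<and> violates Q2 \<beta> \<and> p \<notin> Q2))"
proof -
  obtain C2 where Q2: "Q2 = con C2"
    using assms(7) unfolding is_polyhedron_def by blast
  have "is_polyhedron Q1"
    using assms(1,2,4) unfolding is_polyhedron_def by blast
  then have "poly_hull Q1 Q2 \<noteq> Q1 \<union> Q2 \<longleftrightarrow> \<not> convex (con C1 \<union> con C2)"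
    using poly_hull_eq_Un_iff_convex assms(4,7) Q2 by blast
  also have "\<dots> \<longleftrightarrow> \<not> (\<forall>\<beta>\<in>C1. violates (con C2) \<beta> \<longrightarrow>
      (\<forall>r\<in>R1. ray_saturates r \<beta> \<longrightarrow> is_ray_of (con C2) r) \<and>
      (\<forall>p\<in>P1. point_saturates p \<beta> \<longrightarrow> p \<in> con C2))"
    using convex_Un_con_gen_iff[OF assms(1) _ assms(3)] assms(4-6) by simp
  finally show ?thesis unfolding Q2 by blast
qed

end
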